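(* Suppose $\vdash t:A\vee B$ in the system $\mathsf{HA}+\mathsf{EM}_1^-$, where $t$ and $A\vee B$ are closed. Then there exists a term $u$ such that $\vdash u:A$ or a term $v$ such that $\vdash v:B$.
   Context: $\mathsf{HA}+\mathsf{EM}_1^-$ is the Curry–Howard proof-term system for intuitionistic (Heyting) arithmetic over the language $\mathcal{L}$ ($0,\mathsf{S},+,\cdot,=$; atomic formulas are decidable and $\mathsf{P}^\bot$ denotes the complementary atomic predicate of $\mathsf{P}$): natural deduction rules for $\wedge,\to,\vee,\forall,\exists$ with the usual proof terms, an induction rule, Post rules for atomic formulas (equality, Peano axioms, propositional tautologies between atomic formulas), hypothesis terms $\mathsf{H}_a^{\forall\alpha\mathsf{P}}:\forall\alpha\mathsf{P}$ (for $a:\forall\alpha\mathsf{P}$ in the context) and $\mathsf{W}_a^{\exists\alpha\mathsf{P}^\bot}:\exists\alpha\mathsf{P}^\bot$ (for $a:\exists\alpha\mathsf{P}^\bot$ in the context), and the rule $\mathsf{EM}_1^-$: from $\Gamma,a:\forall\alpha\mathsf{P}\vdash u:\exists\beta C$ and $\Gamma,a:\exists\alpha\mathsf{P}^\bot\vdash v:\exists\beta C$, with $\mathsf{P}$ and $C$ atomic, infer $\Gamma\vdash\mathsf{E}_a(u,v):\exists\beta C$. $\vdash t:A$ means $t$ is a proof term of $A$ in the empty context. *)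

theory Defs
  imports Main
begin

section \<open>Language of arithmetic (de Bruijn indices for individual variables)\<close>

datatype trm = TVar nat | TZero | TSuc trm | TPlus trm trm | TTimes trm trm

datatype atom = Eq trm trm | Neq trm trm

fun compl :: "atom \<Rightarrow> atom" where
  "compl (Eq t u) = Neq t u"
| "compl (Neq t u) = Eq t u"

datatype fm = FAtom atom | FConj fm fm | FDisj fm fm | FImp fm fm | FAll fm | FEx fm

primrec tsubst :: "(nat \<Rightarrow> trm) \<Rightarrow> trm \<Rightarrow> trm" where
  "tsubst \<sigma> (TVar n) = \<sigma> n"
| "tsubst \<sigma> TZero = TZero"
| "tsubst \<sigma> (TSuc t) = TSuc (tsubst \<sigma> t)"
| "tsubst \<sigma> (TPlus t u) = TPlus (tsubst \<sigma> t) (tsubst \<sigma> u)"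
| "tsubst \<sigma> (TTimes t u) = TTimes (tsubst \<sigma> t) (tsubst \<sigma> u)"

fun asubst :: "(nat \<Rightarrow> trm) \<Rightarrow> atom \<Rightarrow> atom" where
  "asubst \<sigma> (Eq t u) = Eq (tsubst \<sigma> t) (tsubst \<sigma> u)"
| "asubst \<sigma> (Neq t u) = Neq (tsubst \<sigma> t) (tsubst \<sigma> u)"

definition tlift :: "trm \<Rightarrow> trm" where
  "tlift = tsubst (\<lambda>n. TVar (Suc n))"

definition up :: "(nat \<Rightarrow> trm) \<Rightarrow> nat \<Rightarrow> trm" where
  "up \<sigma> n = (case n of 0 \<Rightarrow> TVar 0 | Suc m \<Rightarrow> tlift (\<sigma> m))"

primrec fsubst :: "(nat \<Rightarrow> trm) \<Rightarrow> fm \<Rightarrow> fm" where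
  "fsubst \<sigma> (FAtom a) = FAtom (asubst \<sigma> a)"
| "fsubst \<sigma> (FConj A B) = FConj (fsubst \<sigma> A) (fsubst \<sigma> B)"
| "fsubst \<sigma> (FDisj A B) = FDisj (fsubst \<sigma> A) (fsubst \<sigma> B)"
| "fsubst \<sigma> (FImp A B) = FImp (fsubst \<sigma> A) (fsubst \<sigma> B)"
| "fsubst \<sigma> (FAll A) = FAll (fsubst (up \<sigma>) A)"
| "fsubst \<sigma> (FEx A) = FEx (fsubst (up \<sigma>) A)"

text \<open>Instantiation of the outermost bound variable (index 0) by a term: A[t/\<alpha>].\<close>
definition inst :: "trm \<Rightarrow> nat \<Rightarrow> trm" where
  "inst t n = (case n of 0 \<Rightarrow> t | Suc m \<Rightarrow> TVar m)"

definition flift :: "fm \<Rightarrow> fm" where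
  "flift = fsubst (\<lambda>n. TVar (Suc n))"

text \<open>A(S \<alpha>) for \<alpha> the variable of index 0 (no change of binding level).\<close>
definition succ0 :: "nat \<Rightarrow> trm" where
  "succ0 n = (if n = 0 then TSuc (TVar 0) else TVar n)"

primrec tfv :: "trm \<Rightarrow> nat set" where
  "tfv (TVar n) = {n}"
| "tfv TZero = {}"
| "tfv (TSuc t) = tfv t"
| "tfv (TPlus t u) = tfv t \<union> tfv u"
| "tfv (TTimes t u) = tfv t \<union> tfv u"

fun afv :: "atom \<Rightarrow> nat set" where
  "afv (Eq t u) = tfv t \<union> tfv u"
| "afv (Neq t u) = tfv t \<union> tfv u"

definition unbind :: "nat set \<Rightarrow> nat set" where
  "unbind S = {n. Suc n \<in> S}"

primrec ffv :: "fm \<Rightarrow> nat set" where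
  "ffv (FAtom a) = afv a"
| "ffv (FConj A B) = ffv A \<union> ffv B"
| "ffv (FDisj A B) = ffv A \<union> ffv B"
| "ffv (FImp A B) = ffv A \<union> ffv B"
| "ffv (FAll A) = unbind (ffv A)"
| "ffv (FEx A) = unbind (ffv A)"

definition fm_closed :: "fm \<Rightarrow> bool" where
  "fm_closed A \<longleftrightarrow> ffv A = {}"

datatype pt =
    PVar nat
  | PHyp nat
  | PWit nat
  | PPair pt pt | PFst pt | PSnd pt
  | PLam nat pt | PApp pt pt
  | PInl pt | PInr pt | PCase pt nat pt nat pt
  | PLamI pt                    \<comment> \<open>\<lambda>\<alpha> u (binds individual variable 0)\<close>
  | PAppI pt trm
  | PPairI trm pt
  | PExE pt nat pt              \<comment> \<open>u[(\<alpha>,x).v] (binds individual variable 0 in v)\<close>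
  | PRec pt pt trm
  | PPost "pt list"
  | PEM nat pt pt

fun ptfv :: "pt \<Rightarrow> nat set" where
  "ptfv (PVar x) = {}"
| "ptfv (PHyp a) = {}"
| "ptfv (PWit a) = {}"
| "ptfv (PPair u v) = ptfv u \<union> ptfv v"
| "ptfv (PFst u) = ptfv u"
| "ptfv (PSnd u) = ptfv u"
| "ptfv (PLam x u) = ptfv u"
| "ptfv (PApp u v) = ptfv u \<union> ptfv v"
| "ptfv (PInl u) = ptfv u"
| "ptfv (PInr u) = ptfv u"
| "ptfv (PCase u x v y w) = ptfv u \<union> ptfv v \<union> ptfv w"
| "ptfv (PLamI u) = unbind (ptfv u)"
| "ptfv (PAppI u t) = ptfv u \<union> tfv t"
| "ptfv (PPairI t u) = tfv t \<union> ptfv u"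
| "ptfv (PExE u x v) = ptfv u \<union> unbind (ptfv v)"
| "ptfv (PRec u v t) = ptfv u \<union> ptfv v \<union> tfv t"
| "ptfv (PPost us) = (\<Union>u\<in>set us. ptfv u)"
| "ptfv (PEM a u v) = ptfv u \<union> ptfv v"

definition pt_closed :: "pt \<Rightarrow> bool" where
  "pt_closed u \<longleftrightarrow> ptfv u = {}"

text \<open>Post rules P1,...,Pn / P: equality axioms (reflexivity, Leibniz substitution for
  atomic formulas), Peano axioms, and propositional tautologies between atomic formulas
  (atoms as propositional variables, with P^\<bottom> read as the negation of P).\<close>
inductive post_rule :: "atom list \<Rightarrow> atom \<Rightarrow> bool" where
  refl: "post_rule [] (Eq t t)"
| leibniz: "post_rule [Eq t u, asubst (inst t) Q] (asubst (inst u) Q)"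
| suc_ne_zero: "post_rule [] (Neq (TSuc t) TZero)"
| suc_inj: "post_rule [Eq (TSuc t) (TSuc u)] (Eq t u)"
| plus_zero: "post_rule [] (Eq (TPlus t TZero) t)"
| plus_suc: "post_rule [] (Eq (TPlus t (TSuc u)) (TSuc (TPlus t u)))"
| times_zero: "post_rule [] (Eq (TTimes t TZero) TZero)"
| times_suc: "post_rule [] (Eq (TTimes t (TSuc u)) (TPlus (TTimes t u) t))"
| taut: "(\<And>v. (\<forall>a. v (compl a) = (\<not> v a)) \<Longrightarrow> (\<forall>Q\<in>set Qs. v Q) \<Longrightarrow> v P)
         \<Longrightarrow> post_rule Qs P"

definition ctx_lift :: "(nat \<times> fm) list \<Rightarrow> (nat \<times> fm) list" where
  "ctx_lift \<Gamma> = map (\<lambda>(x, B). (x, flift B)) \<Gamma>"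

inductive der :: "(nat \<times> fm) list \<Rightarrow> pt \<Rightarrow> fm \<Rightarrow> bool" where
  var: "map_of \<Gamma> x = Some A \<Longrightarrow> der \<Gamma> (PVar x) A"
| hyp: "map_of \<Gamma> a = Some (FAll (FAtom P)) \<Longrightarrow> der \<Gamma> (PHyp a) (FAll (FAtom P))"
| wit: "map_of \<Gamma> a = Some (FEx (FAtom (compl P))) \<Longrightarrow> der \<Gamma> (PWit a) (FEx (FAtom (compl P)))"
| conjI: "der \<Gamma> u A \<Longrightarrow> der \<Gamma> v B \<Longrightarrow> der \<Gamma> (PPair u v) (FConj A B)"
| conjE1: "der \<Gamma> u (FConj A B) \<Longrightarrow> der \<Gamma> (PFst u) A"
| conjE2: "der \<Gamma> u (FConj A B) \<Longrightarrow> der \<Gamma> (PSnd u) B"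
| impI: "der ((x, A) # \<Gamma>) u B \<Longrightarrow> der \<Gamma> (PLam x u) (FImp A B)"
| impE: "der \<Gamma> u (FImp A B) \<Longrightarrow> der \<Gamma> v A \<Longrightarrow> der \<Gamma> (PApp u v) B"
| disjI1: "der \<Gamma> u A \<Longrightarrow> der \<Gamma> (PInl u) (FDisj A B)"
| disjI2: "der \<Gamma> u B \<Longrightarrow> der \<Gamma> (PInr u) (FDisj A B)"
| disjE: "der \<Gamma> u (FDisj A B) \<Longrightarrow> der ((x, A) # \<Gamma>) v C \<Longrightarrow> der ((y, B) # \<Gamma>) w C
           \<Longrightarrow> der \<Gamma> (PCase u x v y w) C"
| allI: "der (ctx_lift \<Gamma>) u A \<Longrightarrow> der \<Gamma> (PLamI u) (FAll A)"
| allE: "der \<Gamma> u (FAll A) \<Longrightarrow> der \<Gamma> (PAppI u t) (fsubst (inst t) A)"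
| exI: "der \<Gamma> u (fsubst (inst t) A) \<Longrightarrow> der \<Gamma> (PPairI t u) (FEx A)"
| exE: "der \<Gamma> u (FEx A) \<Longrightarrow> der ((x, A) # ctx_lift \<Gamma>) v (flift C)
          \<Longrightarrow> der \<Gamma> (PExE u x v) C"
| ind: "der \<Gamma> u (fsubst (inst TZero) A) \<Longrightarrow> der \<Gamma> v (FAll (FImp A (fsubst succ0 A)))
          \<Longrightarrow> der \<Gamma> (PRec u v t) (fsubst (inst t) A)"
| post: "length us = length Ps \<Longrightarrow> (\<forall>i<length us. der \<Gamma> (us ! i) (FAtom (Ps ! i)))
          \<Longrightarrow> post_rule Ps P \<Longrightarrow> der \<Gamma> (PPost us) (FAtom P)"
| em1: "der ((a, FAll (FAtom P)) # \<Gamma>) u (FEx (FAtom C))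
          \<Longrightarrow> der ((a, FEx (FAtom (compl P))) # \<Gamma>) v (FEx (FAtom C))
          \<Longrightarrow> der \<Gamma> (PEM a u v) (FEx (FAtom C))"

end

theory Submission
  imports Defs
begin

text \<open>An Aczel-style slash.  A formula \<open>A\<close> is slashed at an environment \<open>e\<close> of natural
  numbers when its disjunctions and existentials are witnessed by a disjunct, resp. a numeral, whose
  instance is provable, slashed and true, and its implications send provable, slashed and true
  premises to slashed conclusions; so a slashed closed disjunction has a provable disjunct.  Every
  derivable formula is slashed, by induction on derivations.  The only rule not handled as for
  intuitionistic arithmetic is \<open>EM\<^sub>1\<^sup>-\<close>: its conclusion \<open>\<exists>\<beta> C\<close>, with \<open>C\<close> atomic, is true by
  classical soundness, hence has a numeral witness, and a closed true atom is derivable (for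
  disequalities by \<open>EM\<^sub>1\<^sup>-\<close> itself).  Moving between the instances of a formula at a closed term
  and at the numeral of its value uses the Leibniz Post rule.\<close>

type_synonym ctx = "(nat \<times> fm) list"

abbreviation provable :: "ctx \<Rightarrow> fm \<Rightarrow> bool" where
  "provable \<Gamma> A \<equiv> \<exists>w. der \<Gamma> w A"

section \<open>Substitution of terms\<close>

lemma tsubst_tsubst: "tsubst \<sigma> (tsubst \<tau> t) = tsubst (\<lambda>i. tsubst \<sigma> (\<tau> i)) t"
  by (induction t) auto

lemma tsubst_cong: "(\<And>i. i \<in> tfv t \<Longrightarrow> \<sigma> i = \<tau> i) \<Longrightarrow> tsubst \<sigma> t = tsubst \<tau> t"
  by (induction t) auto

lemma tsubst_TVar [simp]: "tsubst TVar t = t"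
  by (induction t) auto

lemma tfv_tsubst: "tfv (tsubst \<sigma> t) = (\<Union>i\<in>tfv t. tfv (\<sigma> i))"
  by (induction t) auto

lemma up_0 [simp]: "up \<sigma> 0 = TVar 0"
  and up_Suc [simp]: "up \<sigma> (Suc m) = tlift (\<sigma> m)"
  by (simp_all add: up_def)

lemma inst_0 [simp]: "inst t 0 = t"
  and inst_Suc [simp]: "inst t (Suc m) = TVar m"
  by (simp_all add: inst_def)

lemma succ0_0 [simp]: "succ0 0 = TSuc (TVar 0)"
  and succ0_Suc [simp]: "succ0 (Suc m) = TVar (Suc m)"
  by (simp_all add: succ0_def)

lemma tsubst_inst_tlift [simp]: "tsubst (inst s) (tlift t) = t"
  by (simp add: tlift_def tsubst_tsubst)

lemma up_comp: "(\<lambda>i. tsubst (up \<sigma>) (up \<tau> i)) = up (\<lambda>i. tsubst \<sigma> (\<tau> i))"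
proof
  fix i show "tsubst (up \<sigma>) (up \<tau> i) = up (\<lambda>i. tsubst \<sigma> (\<tau> i)) i"
    by (cases i) (simp_all add: tlift_def tsubst_tsubst)
qed

lemma up_TVar [simp]: "up TVar = TVar"
  by (rule ext) (simp add: up_def tlift_def split: nat.split)

lemma asubst_asubst: "asubst \<sigma> (asubst \<tau> a) = asubst (\<lambda>i. tsubst \<sigma> (\<tau> i)) a"
  by (cases a) (simp_all add: tsubst_tsubst)

lemma asubst_TVar [simp]: "asubst TVar a = a"
  by (cases a) simp_all

lemma asubst_cong: "(\<And>i. i \<in> afv a \<Longrightarrow> \<sigma> i = \<tau> i) \<Longrightarrow> asubst \<sigma> a = asubst \<tau> a"
  by (cases a) (auto intro!: tsubst_cong)

lemma asubst_closed: "afv a = {} \<Longrightarrow> asubst \<sigma> a = a"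
  using asubst_cong[of a \<sigma> TVar] by simp

lemma asubst_compl: "asubst \<sigma> (compl a) = compl (asubst \<sigma> a)"
  by (cases a) simp_all

lemma afv_compl [simp]: "afv (compl a) = afv a"
  by (cases a) simp_all

lemma fsubst_fsubst: "fsubst \<sigma> (fsubst \<tau> A) = fsubst (\<lambda>i. tsubst \<sigma> (\<tau> i)) A"
  by (induction A arbitrary: \<sigma> \<tau>) (simp_all add: asubst_asubst up_comp)

lemma fsubst_TVar [simp]: "fsubst TVar A = A"
  by (induction A) simp_all

lemma fsubst_cong: "(\<And>i. i \<in> ffv A \<Longrightarrow> \<sigma> i = \<tau> i) \<Longrightarrow> fsubst \<sigma> A = fsubst \<tau> A"
proof (induction A arbitrary: \<sigma> \<tau>)
  case (FAtom a)
  then show ?case by (auto intro: asubst_cong)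
next
  case (FAll A)
  have "fsubst (up \<sigma>) A = fsubst (up \<tau>) A"
    by (rule FAll.IH) (use FAll.prems in \<open>auto simp: unbind_def up_def split: nat.split\<close>)
  then show ?case by simp
next
  case (FEx A)
  have "fsubst (up \<sigma>) A = fsubst (up \<tau>) A"
    by (rule FEx.IH) (use FEx.prems in \<open>auto simp: unbind_def up_def split: nat.split\<close>)
  then show ?case by simp
qed (metis Un_iff ffv.simps(2-4) fsubst.simps(2-4))+

lemma fsubst_closed: "ffv A = {} \<Longrightarrow> fsubst \<sigma> A = A"
  using fsubst_cong[of A \<sigma> TVar] by simp

lemma fsubst_inst: "fsubst \<sigma> (fsubst (inst t) A) = fsubst (inst (tsubst \<sigma> t)) (fsubst (up \<sigma>) A)"
  and asubst_inst: "asubst \<sigma> (asubst (inst t) a) = asubst (inst (tsubst \<sigma> t)) (asubst (up \<sigma>) a)"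
proof -
  have "(\<lambda>i. tsubst \<sigma> (inst t i)) = (\<lambda>i. tsubst (inst (tsubst \<sigma> t)) (up \<sigma> i))"
  proof
    fix i show "tsubst \<sigma> (inst t i) = tsubst (inst (tsubst \<sigma> t)) (up \<sigma> i)"
      by (cases i) simp_all
  qed
  then show "fsubst \<sigma> (fsubst (inst t) A) = fsubst (inst (tsubst \<sigma> t)) (fsubst (up \<sigma>) A)"
    and "asubst \<sigma> (asubst (inst t) a) = asubst (inst (tsubst \<sigma> t)) (asubst (up \<sigma>) a)"
    by (simp_all add: fsubst_fsubst asubst_asubst)
qed

lemma fsubst_up_succ0: "fsubst (up \<sigma>) (fsubst succ0 A) = fsubst succ0 (fsubst (up \<sigma>) A)"
proof -
  have "(\<lambda>i. tsubst (up \<sigma>) (succ0 i)) = (\<lambda>i. tsubst succ0 (up \<sigma> i))"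
  proof
    fix i show "tsubst (up \<sigma>) (succ0 i) = tsubst succ0 (up \<sigma> i)"
      by (cases i) (simp_all add: tlift_def tsubst_tsubst)
  qed
  then show ?thesis by (simp add: fsubst_fsubst)
qed

lemma fsubst_up_flift: "fsubst (up \<sigma>) (flift A) = flift (fsubst \<sigma> A)"
  by (simp add: flift_def fsubst_fsubst tlift_def)

lemma flift_FAtom [simp]: "flift (FAtom a) = FAtom (asubst (\<lambda>n. TVar (Suc n)) a)"
  by (simp add: flift_def)

lemma fsubst_inst_TVar0_up_lift: "fsubst (inst (TVar 0)) (fsubst (up (\<lambda>n. TVar (Suc n))) A) = A"
proof -
  have "(\<lambda>i. tsubst (inst (TVar 0)) (up (\<lambda>n. TVar (Suc n)) i)) = TVar"
  proof
    fix i show "tsubst (inst (TVar 0)) (up (\<lambda>n. TVar (Suc n)) i) = TVar i"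
      by (cases i) (simp_all add: tlift_def)
  qed
  then show ?thesis by (simp add: fsubst_fsubst)
qed

section \<open>Standard semantics and classical soundness\<close>

primrec teval :: "(nat \<Rightarrow> nat) \<Rightarrow> trm \<Rightarrow> nat" where
  "teval e (TVar n) = e n"
| "teval e TZero = 0"
| "teval e (TSuc t) = Suc (teval e t)"
| "teval e (TPlus t u) = teval e t + teval e u"
| "teval e (TTimes t u) = teval e t * teval e u"

fun aeval :: "(nat \<Rightarrow> nat) \<Rightarrow> atom \<Rightarrow> bool" where
  "aeval e (Eq t u) \<longleftrightarrow> teval e t = teval e u"
| "aeval e (Neq t u) \<longleftrightarrow> teval e t \<noteq> teval e u"

primrec holds :: "(nat \<Rightarrow> nat) \<Rightarrow> fm \<Rightarrow> bool" where
  "holds e (FAtom a) \<longleftrightarrow> aeval e a"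
| "holds e (FConj A B) \<longleftrightarrow> holds e A \<and> holds e B"
| "holds e (FDisj A B) \<longleftrightarrow> holds e A \<or> holds e B"
| "holds e (FImp A B) \<longleftrightarrow> (holds e A \<longrightarrow> holds e B)"
| "holds e (FAll A) \<longleftrightarrow> (\<forall>n. holds (case_nat n e) A)"
| "holds e (FEx A) \<longleftrightarrow> (\<exists>n. holds (case_nat n e) A)"

lemma teval_tsubst: "teval e (tsubst \<sigma> t) = teval (\<lambda>i. teval e (\<sigma> i)) t"
  by (induction t) simp_all

lemma aeval_asubst: "aeval e (asubst \<sigma> a) \<longleftrightarrow> aeval (\<lambda>i. teval e (\<sigma> i)) a"
  by (cases a) (simp_all add: teval_tsubst)

lemma aeval_compl: "aeval e (compl a) \<longleftrightarrow> \<not> aeval e a"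
  by (cases a) simp_all

lemma teval_up: "(\<lambda>i. teval (case_nat n e) (up \<sigma> i)) = case_nat n (\<lambda>i. teval e (\<sigma> i))"
  by (rule ext) (simp add: up_def tlift_def teval_tsubst split: nat.split)

lemma teval_inst: "(\<lambda>i. teval e (inst t i)) = case_nat (teval e t) e"
  by (rule ext) (simp add: inst_def split: nat.split)

lemma teval_succ0: "(\<lambda>i. teval (case_nat n e) (succ0 i)) = case_nat (Suc n) e"
  by (rule ext) (simp add: succ0_def split: nat.split)

lemma holds_fsubst: "holds e (fsubst \<sigma> A) \<longleftrightarrow> holds (\<lambda>i. teval e (\<sigma> i)) A"
  by (induction A arbitrary: e \<sigma>) (simp_all add: aeval_asubst teval_up)

lemma holds_flift: "holds (case_nat n e) (flift A) \<longleftrightarrow> holds e A"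
  by (simp add: flift_def holds_fsubst)

lemma holds_inst: "holds e (fsubst (inst t) A) \<longleftrightarrow> holds (case_nat (teval e t) e) A"
  by (simp add: holds_fsubst teval_inst)

lemma holds_succ0: "holds (case_nat n e) (fsubst succ0 A) \<longleftrightarrow> holds (case_nat (Suc n) e) A"
  by (simp add: holds_fsubst teval_succ0)

lemma post_rule_sound: "post_rule Ps P \<Longrightarrow> \<forall>Q\<in>set Ps. aeval e Q \<Longrightarrow> aeval e P"
proof (induction rule: post_rule.induct)
  case (leibniz t u Q)
  then show ?case by (auto simp: aeval_asubst teval_inst)
next
  case (taut Qs P)
  then show ?case using taut.hyps[of "aeval e"] by (simp add: aeval_compl)
qed simp_all

lemma snd_set_ctx_lift: "snd ` set (ctx_lift \<Gamma>) = flift ` snd ` set \<Gamma>"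
  by (force simp: ctx_lift_def)

lemma der_sound:
  assumes "der \<Gamma> u A" and "\<forall>B\<in>snd ` set \<Gamma>. holds e B"
  shows "holds e A"
  using assms
proof (induction arbitrary: e rule: der.induct)
  case (var \<Gamma> x A)
  then show ?case by (force dest: map_of_SomeD)
next
  case (hyp \<Gamma> a P)
  then show ?case by (force dest: map_of_SomeD)
next
  case (wit \<Gamma> a P)
  then show ?case by (force dest: map_of_SomeD)
next
  case (conjE1 \<Gamma> u A B)
  then show ?case by (meson holds.simps(2))
next
  case (conjE2 \<Gamma> u A B)
  then show ?case by (meson holds.simps(2))
next
  case (impE \<Gamma> u A B v)
  then show ?case by (meson holds.simps(4))
next
  case (disjE \<Gamma> u A B x v C y w)
  then have "holds e A \<or> holds e B" by simp
  with disjE.IH(2,3)[of e] disjE.prems show ?case by auto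
next
  case (allI \<Gamma> u A)
  then show ?case by (simp add: snd_set_ctx_lift holds_flift)
next
  case (exI \<Gamma> u t A)
  from exI.IH[OF exI.prems] show ?case by (auto simp: holds_inst)
next
  case (exE \<Gamma> u A x v C)
  then obtain n where "holds (case_nat n e) A" by (meson holds.simps(6))
  with exE.IH(2)[of "case_nat n e"] exE.prems have "holds (case_nat n e) (flift C)"
    by (simp add: snd_set_ctx_lift holds_flift)
  then show ?case by (simp add: holds_flift)
next
  case (ind \<Gamma> u A v t)
  have "holds (case_nat n e) A" for n
    using ind by (induction n) (simp_all add: holds_inst holds_succ0)
  then show ?case by (simp add: holds_inst)
next
  case (post us Ps \<Gamma> P)
  then have "\<forall>Q\<in>set Ps. aeval e Q" by (force simp: in_set_conv_nth)
  with post.hyps(2) show ?case by (simp add: post_rule_sound)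
next
  case (em1 a P \<Gamma> u C v)
  then show ?case by (cases "\<forall>n. aeval (case_nat n e) P") (auto simp: aeval_compl)
qed (simp_all add: holds_inst)

section \<open>Derivations under substitution\<close>

definition ctx_embeds :: "(nat \<Rightarrow> nat) \<Rightarrow> (nat \<Rightarrow> trm) \<Rightarrow> ctx \<Rightarrow> ctx \<Rightarrow> bool" where
  "ctx_embeds r \<sigma> \<Gamma> \<Delta> \<longleftrightarrow> (\<forall>x B. map_of \<Gamma> x = Some B \<longrightarrow> map_of \<Delta> (r x) = Some (fsubst \<sigma> B))"

lemma fresh_name: "\<exists>x::nat. x \<notin> fst ` set \<Delta>"
  by (meson ex_new_if_finite finite_imageI finite_set infinite_UNIV_nat)

lemma ctx_embeds_Cons:
  assumes "ctx_embeds r \<sigma> \<Gamma> \<Delta>" and "x' \<notin> fst ` set \<Delta>"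
  shows "ctx_embeds (r(x := x')) \<sigma> ((x, A) # \<Gamma>) ((x', fsubst \<sigma> A) # \<Delta>)"
  using assms unfolding ctx_embeds_def by (auto simp: map_of_eq_None_iff[symmetric])

lemma map_of_ctx_lift: "map_of (ctx_lift \<Gamma>) x = map_option flift (map_of \<Gamma> x)"
  by (simp add: ctx_lift_def map_of_map)

lemma ctx_embeds_lift: "ctx_embeds r \<sigma> \<Gamma> \<Delta> \<Longrightarrow> ctx_embeds r (up \<sigma>) (ctx_lift \<Gamma>) (ctx_lift \<Delta>)"
  unfolding ctx_embeds_def by (auto simp: map_of_ctx_lift fsubst_up_flift)

lemma post_rule_asubst: "post_rule Ps P \<Longrightarrow> post_rule (map (asubst \<sigma>) Ps) (asubst \<sigma> P)"
proof (induction rule: post_rule.induct)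
  case (leibniz t u Q)
  then show ?case by (simp add: asubst_inst post_rule.leibniz)
next
  case (taut Qs P)
  show ?case
  proof (rule post_rule.taut)
    fix v :: "atom \<Rightarrow> bool"
    assume "\<forall>a. v (compl a) = (\<not> v a)" and "\<forall>Q\<in>set (map (asubst \<sigma>) Qs). v Q"
    then show "v (asubst \<sigma> P)"
      using taut.hyps[of "v \<circ> asubst \<sigma>"] by (simp add: asubst_compl)
  qed
qed (simp_all add: post_rule.intros)

lemma provable_post:
  assumes "post_rule Ps P" and "\<forall>Q\<in>set Ps. provable \<Gamma> (FAtom Q)"
  shows "provable \<Gamma> (FAtom P)"
proof -
  define ws where "ws = map (\<lambda>Q. SOME w. der \<Gamma> w (FAtom Q)) Ps"
  have "\<forall>i<length ws. der \<Gamma> (ws ! i) (FAtom (Ps ! i))"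
    using assms(2) by (auto simp: ws_def intro: someI_ex)
  with assms(1) show ?thesis
    by (metis der.post length_map ws_def)
qed

lemma der_fsubst:
  assumes "der \<Gamma> u A" and "ctx_embeds r \<sigma> \<Gamma> \<Delta>"
  shows "provable \<Delta> (fsubst \<sigma> A)"
  using assms
proof (induction arbitrary: \<Delta> r \<sigma> rule: der.induct)
  case (var \<Gamma> x A)
  then show ?case unfolding ctx_embeds_def by (meson der.var)
next
  case (hyp \<Gamma> a P)
  then have "map_of \<Delta> (r a) = Some (FAll (FAtom (asubst (up \<sigma>) P)))"
    unfolding ctx_embeds_def by simp
  then show ?case by (auto intro: der.hyp)
next
  case (wit \<Gamma> a P)
  then have "map_of \<Delta> (r a) = Some (FEx (FAtom (compl (asubst (up \<sigma>) P))))"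
    unfolding ctx_embeds_def by (simp add: asubst_compl)
  then show ?case by (auto simp: asubst_compl intro: der.wit)
next
  case (impI x A \<Gamma> u B)
  obtain x' where "x' \<notin> fst ` set \<Delta>" using fresh_name by blast
  from impI.IH[OF ctx_embeds_Cons[OF impI.prems this]]
  obtain w where "der ((x', fsubst \<sigma> A) # \<Delta>) w (fsubst \<sigma> B)" ..
  then show ?case by (auto intro: der.impI)
next
  case (disjE \<Gamma> u A B x v C y w)
  obtain x' where x': "x' \<notin> fst ` set \<Delta>" using fresh_name by blast
  obtain w0 where "der \<Delta> w0 (FDisj (fsubst \<sigma> A) (fsubst \<sigma> B))"
    using disjE.IH(1)[OF disjE.prems] by auto
  moreover obtain w1 where "der ((x', fsubst \<sigma> A) # \<Delta>) w1 (fsubst \<sigma> C)"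
    using disjE.IH(2)[OF ctx_embeds_Cons[OF disjE.prems x']] ..
  moreover obtain w2 where "der ((x', fsubst \<sigma> B) # \<Delta>) w2 (fsubst \<sigma> C)"
    using disjE.IH(3)[OF ctx_embeds_Cons[OF disjE.prems x']] ..
  ultimately show ?case by (blast intro: der.disjE)
next
  case (allI \<Gamma> u A)
  from allI.IH[OF ctx_embeds_lift[OF allI.prems]]
  obtain w where "der (ctx_lift \<Delta>) w (fsubst (up \<sigma>) A)" ..
  then show ?case by (auto intro: der.allI)
next
  case (allE \<Gamma> u A t)
  from allE.IH[OF allE.prems] obtain w where "der \<Delta> w (FAll (fsubst (up \<sigma>) A))" by auto
  from der.allE[OF this, of "tsubst \<sigma> t"] show ?case by (auto simp: fsubst_inst)
next
  case (exI \<Gamma> u t A)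
  from exI.IH[OF exI.prems]
  obtain w where "der \<Delta> w (fsubst (inst (tsubst \<sigma> t)) (fsubst (up \<sigma>) A))"
    by (auto simp: fsubst_inst)
  from der.exI[OF this] show ?case by auto
next
  case (exE \<Gamma> u A x v C)
  obtain x' where x': "x' \<notin> fst ` set (ctx_lift \<Delta>)" using fresh_name by blast
  obtain w0 where "der \<Delta> w0 (FEx (fsubst (up \<sigma>) A))"
    using exE.IH(1)[OF exE.prems] by auto
  moreover obtain w1 where "der ((x', fsubst (up \<sigma>) A) # ctx_lift \<Delta>) w1 (flift (fsubst \<sigma> C))"
    using exE.IH(2)[OF ctx_embeds_Cons[OF ctx_embeds_lift[OF exE.prems] x']]
    by (auto simp: fsubst_up_flift)
  ultimately show ?case by (blast intro: der.exE)
next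
  case (ind \<Gamma> u A v t)
  obtain w0 where "der \<Delta> w0 (fsubst (inst TZero) (fsubst (up \<sigma>) A))"
    using ind.IH(1)[OF ind.prems] by (auto simp: fsubst_inst)
  moreover obtain w1 where
    "der \<Delta> w1 (FAll (FImp (fsubst (up \<sigma>) A) (fsubst succ0 (fsubst (up \<sigma>) A))))"
    using ind.IH(2)[OF ind.prems] by (auto simp: fsubst_up_succ0)
  ultimately show ?case by (metis der.ind fsubst_inst)
next
  case (post us Ps \<Gamma> P)
  then have "\<forall>Q\<in>set (map (asubst \<sigma>) Ps). provable \<Delta> (FAtom Q)"
    by (fastforce simp: in_set_conv_nth)
  then show ?case using provable_post[OF post_rule_asubst[OF post.hyps(2)]] by simp
next
  case (em1 a P \<Gamma> u C v)
  obtain a' where "a' \<notin> fst ` set \<Delta>" using fresh_name by blast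
  from em1.IH[OF ctx_embeds_Cons[OF em1.prems this]]
  obtain w1 w2 where
    "der ((a', FAll (FAtom (asubst (up \<sigma>) P))) # \<Delta>) w1 (FEx (FAtom (asubst (up \<sigma>) C)))"
    "der ((a', FEx (FAtom (compl (asubst (up \<sigma>) P)))) # \<Delta>) w2 (FEx (FAtom (asubst (up \<sigma>) C)))"
    by (auto simp: asubst_compl)
  then show ?case by (auto intro: der.em1)
next
  case (conjI \<Gamma> u A v B)
  then show ?case by (metis der.conjI fsubst.simps(2))
next
  case (conjE1 \<Gamma> u A B)
  then show ?case by (metis der.conjE1 fsubst.simps(2))
next
  case (conjE2 \<Gamma> u A B)
  then show ?case by (metis der.conjE2 fsubst.simps(2))
next
  case (impE \<Gamma> u A B v)
  then show ?case by (metis der.impE fsubst.simps(4))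
next
  case (disjI1 \<Gamma> u A B)
  then show ?case by (metis der.disjI1 fsubst.simps(3))
next
  case (disjI2 \<Gamma> u B A)
  then show ?case by (metis der.disjI2 fsubst.simps(3))
qed

lemma provable_weaken: "provable \<Gamma> A \<Longrightarrow> map_of \<Gamma> \<subseteq>\<^sub>m map_of \<Gamma>' \<Longrightarrow> provable \<Gamma>' A"
  using der_fsubst[of \<Gamma> _ A id TVar \<Gamma>'] by (auto simp: ctx_embeds_def map_le_def dom_def)

lemma provable_weaken_Nil: "provable [] A \<Longrightarrow> provable \<Gamma> A"
  using provable_weaken by fastforce

lemma provable_weaken_fresh: "provable \<Gamma> A \<Longrightarrow> x \<notin> fst ` set \<Gamma> \<Longrightarrow> provable ((x, B) # \<Gamma>) A"
  by (erule provable_weaken) (force simp: map_le_def dest: map_of_SomeD)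

lemma provable_flift: "provable \<Gamma> A \<Longrightarrow> provable (ctx_lift \<Gamma>) (flift A)"
  using der_fsubst[of \<Gamma> _ A id "\<lambda>n. TVar (Suc n)" "ctx_lift \<Gamma>"]
  by (auto simp: ctx_embeds_def map_of_ctx_lift flift_def)

lemma provable_discharge: "der \<Gamma> w A \<Longrightarrow> \<forall>B\<in>snd ` set \<Gamma>. provable [] B \<Longrightarrow> provable [] A"
proof (induction \<Gamma> arbitrary: w A)
  case (Cons p \<Gamma>)
  obtain x C where p: "p = (x, C)" by fastforce
  with Cons.prems(1) have "der \<Gamma> (PLam x w) (FImp C A)" by (auto intro: der.impI)
  moreover have "\<forall>B\<in>snd ` set \<Gamma>. provable [] B" using Cons.prems(2) by simp
  ultimately obtain w1 where "der [] w1 (FImp C A)" using Cons.IH by blast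
  moreover obtain w0 where "der [] w0 C" using Cons.prems(2) p by auto
  ultimately show ?case by (blast intro: der.impE)
qed blast

lemma provable_fsubst_of_hyps:
  assumes "der \<Gamma> u A" and "\<forall>B\<in>snd ` set \<Gamma>. provable [] (fsubst \<sigma> B)"
  shows "provable [] (fsubst \<sigma> A)"
proof -
  let ?\<Delta> = "map (\<lambda>(x, B). (x, fsubst \<sigma> B)) \<Gamma>"
  have "ctx_embeds id \<sigma> \<Gamma> ?\<Delta>" by (simp add: ctx_embeds_def map_of_map)
  with assms(1) obtain w where "der ?\<Delta> w (fsubst \<sigma> A)" using der_fsubst by blast
  moreover have "\<forall>B\<in>snd ` set ?\<Delta>. provable [] B" using assms(2) by force
  ultimately show ?thesis by (rule provable_discharge)
qed

section \<open>Equational reasoning inside the calculus\<close>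

lemma provable_Eq_refl: "provable \<Gamma> (FAtom (Eq t t))"
  using provable_post[OF post_rule.refl] by simp

lemma provable_leibniz:
  "provable \<Gamma> (FAtom (Eq s t)) \<Longrightarrow> provable \<Gamma> (FAtom (asubst (inst s) Q))
    \<Longrightarrow> provable \<Gamma> (FAtom (asubst (inst t) Q))"
  using provable_post[OF post_rule.leibniz] by simp

lemma provable_Eq_sym: "provable \<Gamma> (FAtom (Eq a b)) \<Longrightarrow> provable \<Gamma> (FAtom (Eq b a))"
  using provable_leibniz[of \<Gamma> a b "Eq (TVar 0) (tlift a)"] provable_Eq_refl by simp

lemma provable_Eq_trans:
  "provable \<Gamma> (FAtom (Eq a b)) \<Longrightarrow> provable \<Gamma> (FAtom (Eq b c)) \<Longrightarrow> provable \<Gamma> (FAtom (Eq a c))"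
  using provable_leibniz[of \<Gamma> b c "Eq (tlift a) (TVar 0)"] by simp

lemma provable_Eq_inst_cong:
  "provable \<Gamma> (FAtom (Eq a b)) \<Longrightarrow> provable \<Gamma> (FAtom (Eq (tsubst (inst a) s) (tsubst (inst b) s)))"
  using provable_leibniz[of \<Gamma> a b "Eq (tlift (tsubst (inst a) s)) s"] provable_Eq_refl by simp

lemma provable_Eq_TSuc_cong:
  "provable \<Gamma> (FAtom (Eq a b)) \<Longrightarrow> provable \<Gamma> (FAtom (Eq (TSuc a) (TSuc b)))"
  using provable_Eq_inst_cong[of \<Gamma> a b "TSuc (TVar 0)"] by simp

lemma provable_Eq_cong2:
  assumes f: "\<And>\<sigma> x y. tsubst \<sigma> (f x y) = f (tsubst \<sigma> x) (tsubst \<sigma> y)"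
    and "provable \<Gamma> (FAtom (Eq a a'))" and "provable \<Gamma> (FAtom (Eq b b'))"
  shows "provable \<Gamma> (FAtom (Eq (f a b) (f a' b')))"
proof -
  have "provable \<Gamma> (FAtom (Eq (f a b) (f a' b)))"
    using provable_Eq_inst_cong[OF assms(2), of "f (TVar 0) (tlift b)"] by (simp add: f)
  moreover have "provable \<Gamma> (FAtom (Eq (f a' b) (f a' b')))"
    using provable_Eq_inst_cong[OF assms(3), of "f (tlift a') (TVar 0)"] by (simp add: f)
  ultimately show ?thesis by (rule provable_Eq_trans)
qed

lemmas provable_Eq_TPlus_cong = provable_Eq_cong2[of TPlus, simplified]
  and provable_Eq_TTimes_cong = provable_Eq_cong2[of TTimes, simplified]

lemma provable_Eq_tsubst:
  "\<forall>i. provable \<Gamma> (FAtom (Eq (\<sigma> i) (\<tau> i))) \<Longrightarrow> provable \<Gamma> (FAtom (Eq (tsubst \<sigma> s) (tsubst \<tau> s)))"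
  by (induction s)
    (auto intro: provable_Eq_refl provable_Eq_TSuc_cong provable_Eq_TPlus_cong provable_Eq_TTimes_cong)

lemma provable_Neq_cong:
  assumes "provable \<Gamma> (FAtom (Neq a b))"
    and "provable \<Gamma> (FAtom (Eq a a'))" and "provable \<Gamma> (FAtom (Eq b b'))"
  shows "provable \<Gamma> (FAtom (Neq a' b'))"
proof -
  have "provable \<Gamma> (FAtom (Neq a' b))"
    using provable_leibniz[OF assms(2), of "Neq (TVar 0) (tlift b)"] assms(1) by simp
  then show ?thesis
    using provable_leibniz[OF assms(3), of "Neq (tlift a') (TVar 0)"] by simp
qed

lemma provable_atom_cong:
  assumes a: "provable \<Gamma> (FAtom (asubst \<sigma> a))"
    and \<sigma>\<tau>: "\<forall>i. provable \<Gamma> (FAtom (Eq (\<sigma> i) (\<tau> i)))"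
  shows "provable \<Gamma> (FAtom (asubst \<tau> a))"
proof -
  have s: "provable \<Gamma> (FAtom (Eq (tsubst \<sigma> s) (tsubst \<tau> s)))" for s
    using provable_Eq_tsubst[OF \<sigma>\<tau>] .
  show ?thesis
  proof (cases a)
    case (Eq s t)
    with a have "provable \<Gamma> (FAtom (Eq (tsubst \<sigma> s) (tsubst \<sigma> t)))" by simp
    with provable_Eq_sym[OF s[of s]] have "provable \<Gamma> (FAtom (Eq (tsubst \<tau> s) (tsubst \<sigma> t)))"
      by (rule provable_Eq_trans)
    from provable_Eq_trans[OF this s[of t]] Eq show ?thesis by simp
  next
    case (Neq s t)
    with a have "provable \<Gamma> (FAtom (Neq (tsubst \<sigma> s) (tsubst \<sigma> t)))" by simp
    from provable_Neq_cong[OF this s s] Neq show ?thesis by simp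
  qed
qed

lemma provable_Eq_up:
  assumes "\<forall>i. provable [] (FAtom (Eq (\<sigma> i) (\<tau> i)))"
  shows "\<forall>i. provable [] (FAtom (Eq (up \<sigma> i) (up \<tau> i)))"
proof
  fix i show "provable [] (FAtom (Eq (up \<sigma> i) (up \<tau> i)))"
  proof (cases i)
    case (Suc m)
    then show ?thesis
      using provable_flift[of "[]" "FAtom (Eq (\<sigma> m) (\<tau> m))"] assms
      by (simp add: ctx_lift_def tlift_def)
  qed (simp add: provable_Eq_refl)
qed

lemma provable_fsubst_cong:
  assumes "provable \<Gamma> (fsubst \<sigma> A)" and "\<forall>i. provable [] (FAtom (Eq (\<sigma> i) (\<tau> i)))"
  shows "provable \<Gamma> (fsubst \<tau> A)"
  using assms
proof (induction A arbitrary: \<Gamma> \<sigma> \<tau>)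
  case (FAtom a)
  then show ?case by (auto intro: provable_atom_cong provable_weaken_Nil)
next
  case (FConj A B)
  then obtain w where "der \<Gamma> w (FConj (fsubst \<sigma> A) (fsubst \<sigma> B))" by auto
  then have "provable \<Gamma> (fsubst \<sigma> A)" and "provable \<Gamma> (fsubst \<sigma> B)"
    by (blast intro: der.conjE1 der.conjE2)+
  then obtain w1 w2 where "der \<Gamma> w1 (fsubst \<tau> A)" and "der \<Gamma> w2 (fsubst \<tau> B)"
    using FConj.IH[OF _ FConj.prems(2)] by meson
  then show ?case by (auto intro: der.conjI)
next
  case (FDisj A B)
  obtain x where x: "x \<notin> fst ` set \<Gamma>" using fresh_name by blast
  obtain w where "der \<Gamma> w (FDisj (fsubst \<sigma> A) (fsubst \<sigma> B))" using FDisj.prems(1) by auto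
  moreover obtain w1 where "der ((x, fsubst \<sigma> A) # \<Gamma>) w1 (fsubst \<tau> A)"
    using FDisj.IH(1)[OF _ FDisj.prems(2)] der.var[of "(x, fsubst \<sigma> A) # \<Gamma>" x] by auto
  moreover obtain w2 where "der ((x, fsubst \<sigma> B) # \<Gamma>) w2 (fsubst \<tau> B)"
    using FDisj.IH(2)[OF _ FDisj.prems(2)] der.var[of "(x, fsubst \<sigma> B) # \<Gamma>" x] by auto
  ultimately have "der \<Gamma> (PCase w x (PInl w1) x (PInr w2)) (FDisj (fsubst \<tau> A) (fsubst \<tau> B))"
    by (blast intro: der.disjE der.disjI1 der.disjI2)
  then show ?case by auto
next
  case (FImp A B)
  obtain x where x: "x \<notin> fst ` set \<Gamma>" using fresh_name by blast
  let ?\<Gamma>' = "(x, fsubst \<tau> A) # \<Gamma>"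
  have "\<forall>i. provable [] (FAtom (Eq (\<tau> i) (\<sigma> i)))"
    using FImp.prems(2) provable_Eq_sym by blast
  with FImp.IH(1) der.var[of ?\<Gamma>' x] obtain w1 where "der ?\<Gamma>' w1 (fsubst \<sigma> A)" by fastforce
  moreover obtain w where "der ?\<Gamma>' w (FImp (fsubst \<sigma> A) (fsubst \<sigma> B))"
    using provable_weaken_fresh[OF _ x] FImp.prems(1) by fastforce
  ultimately have "provable ?\<Gamma>' (fsubst \<sigma> B)" by (blast intro: der.impE)
  then obtain w2 where "der ?\<Gamma>' w2 (fsubst \<tau> B)" using FImp.IH(2) FImp.prems(2) by blast
  then show ?case by (auto intro: der.impI)
next
  case (FAll A)
  from FAll.prems(1) obtain w where "der \<Gamma> w (FAll (fsubst (up \<sigma>) A))" by auto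
  then obtain w1 where "der (ctx_lift \<Gamma>) w1 (FAll (fsubst (up (\<lambda>n. TVar (Suc n))) (fsubst (up \<sigma>) A)))"
    using provable_flift by (fastforce simp: flift_def)
  from der.allE[OF this, of "TVar 0"]
  have "der (ctx_lift \<Gamma>) (PAppI w1 (TVar 0)) (fsubst (up \<sigma>) A)"
    by (simp add: fsubst_inst_TVar0_up_lift)
  then obtain w2 where "der (ctx_lift \<Gamma>) w2 (fsubst (up \<tau>) A)"
    using FAll.IH provable_Eq_up[OF FAll.prems(2)] by blast
  then show ?case by (auto intro: der.allI)
next
  case (FEx A)
  obtain x where x: "x \<notin> fst ` set (ctx_lift \<Gamma>)" using fresh_name by blast
  let ?\<Gamma>' = "(x, fsubst (up \<sigma>) A) # ctx_lift \<Gamma>"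
  from FEx.prems(1) obtain w where "der \<Gamma> w (FEx (fsubst (up \<sigma>) A))" by auto
  moreover obtain w1 where "der ?\<Gamma>' w1 (fsubst (up \<tau>) A)"
    using FEx.IH[OF _ provable_Eq_up[OF FEx.prems(2)]] der.var[of ?\<Gamma>' x] by fastforce
  then have "der ?\<Gamma>' (PPairI (TVar 0) w1) (flift (FEx (fsubst (up \<tau>) A)))"
    by (auto simp: flift_def fsubst_inst_TVar0_up_lift intro: der.exI)
  ultimately show ?case by (auto intro: der.exE)
qed

section \<open>Closed true atoms are provable\<close>

primrec num :: "nat \<Rightarrow> trm" where
  "num 0 = TZero"
| "num (Suc n) = TSuc (num n)"

lemma tfv_num [simp]: "tfv (num n) = {}"
  by (induction n) simp_all

lemma teval_num [simp]: "teval e (num n) = n"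
  by (induction n) simp_all

lemma provable_Eq_TPlus_num: "provable \<Gamma> (FAtom (Eq (TPlus (num m) (num n)) (num (m + n))))"
proof (induction n)
  case 0
  show ?case using provable_post[OF post_rule.plus_zero] by simp
next
  case (Suc n)
  have "provable \<Gamma> (FAtom (Eq (TPlus (num m) (TSuc (num n))) (TSuc (TPlus (num m) (num n)))))"
    using provable_post[OF post_rule.plus_suc] by simp
  with provable_Eq_TSuc_cong[OF Suc] show ?case
    by (auto intro: provable_Eq_trans)
qed

lemma provable_Eq_TTimes_num: "provable \<Gamma> (FAtom (Eq (TTimes (num m) (num n)) (num (m * n))))"
proof (induction n)
  case 0
  show ?case using provable_post[OF post_rule.times_zero] by simp
next
  case (Suc n)
  have "provable \<Gamma> (FAtom (Eq (TTimes (num m) (TSuc (num n))) (TPlus (TTimes (num m) (num n)) (num m))))"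
    using provable_post[OF post_rule.times_suc] by simp
  moreover have "provable \<Gamma> (FAtom (Eq (TPlus (TTimes (num m) (num n)) (num m)) (TPlus (num (m * n)) (num m))))"
    using provable_Eq_TPlus_cong[OF Suc provable_Eq_refl] .
  moreover have "provable \<Gamma> (FAtom (Eq (TPlus (num (m * n)) (num m)) (num (m * Suc n))))"
    using provable_Eq_TPlus_num[of \<Gamma> "m * n" m] by (simp add: add.commute)
  ultimately show ?case by (simp, meson provable_Eq_trans)
qed

lemma provable_Eq_num_teval:
  "tfv t = {} \<Longrightarrow> provable \<Gamma> (FAtom (Eq t (num (teval e t))))"
proof (induction t)
  case (TPlus t u)
  then show ?case
    using provable_Eq_trans[OF provable_Eq_TPlus_cong provable_Eq_TPlus_num] by simp
next
  case (TTimes t u)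
  then show ?case
    using provable_Eq_trans[OF provable_Eq_TTimes_cong provable_Eq_TTimes_num] by simp
qed (simp_all add: provable_Eq_refl provable_Eq_TSuc_cong)

lemma provable_absurd:
  assumes "provable \<Gamma> (FAtom Q)" and "provable \<Gamma> (FAtom (compl Q))"
  shows "provable \<Gamma> (FAtom X)"
proof (rule provable_post)
  show "post_rule [Q, compl Q] X" by (rule post_rule.taut) auto
qed (use assms in auto)

text \<open>An instance of \<open>EM\<^sub>1\<^sup>-\<close> with a vacuous quantifier: in the branch \<open>\<forall>\<alpha> P\<close> the refutation
  of \<open>P\<close> yields a witness of \<open>\<exists>\<alpha> P\<^sup>\<bottom>\<close>, and in the other branch that witness is the hypothesis.\<close>
lemma provable_compl_by_em1:
  assumes P: "afv P = {}" and "provable [(y, FAtom P)] (FAtom (compl P))"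
  shows "provable [] (FAtom (compl P))"
proof -
  let ?\<Gamma> = "[(0, FAll (FAtom P))]"
  have "der ?\<Gamma> (PHyp 0) (FAll (FAtom P))" by (rule der.hyp) simp
  from der.allE[OF this, of TZero] have p: "der ?\<Gamma> (PAppI (PHyp 0) TZero) (FAtom P)"
    by (simp add: asubst_closed P)
  obtain w where "der [] w (FImp (FAtom P) (FAtom (compl P)))"
    using assms(2) der.impI by blast
  then obtain w' where "der ?\<Gamma> w' (FImp (FAtom P) (FAtom (compl P)))"
    using provable_weaken_Nil by blast
  from der.impE[OF this p] have "der ?\<Gamma> (PApp w' (PAppI (PHyp 0) TZero)) (fsubst (inst TZero) (FAtom (compl P)))"
    by (simp add: asubst_closed P)
  from der.exI[OF this]
  have all_branch: "der ?\<Gamma> (PPairI TZero (PApp w' (PAppI (PHyp 0) TZero))) (FEx (FAtom (compl P)))" .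
  have ex_branch: "der [(0, FEx (FAtom (compl P)))] (PWit 0) (FEx (FAtom (compl P)))"
    by (rule der.wit) simp
  have "der ((0, FAtom (compl P)) # ctx_lift []) (PVar 0) (flift (FAtom (compl P)))"
    by (rule der.var) (simp add: asubst_closed P)
  from der.exE[OF der.em1[OF all_branch ex_branch] this] show ?thesis ..
qed

lemma provable_Eq_TSuc_cancel:
  "provable \<Gamma> (FAtom (Eq (TSuc a) (TSuc b))) \<Longrightarrow> provable \<Gamma> (FAtom (Eq a b))"
  by (rule provable_post[OF post_rule.suc_inj]) simp

lemma provable_Eq_num_cancel:
  "provable \<Gamma> (FAtom (Eq (num (k + i)) (num (k + j)))) \<Longrightarrow> provable \<Gamma> (FAtom (Eq (num i) (num j)))"
proof (induction k)
  case (Suc k)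
  then have "provable \<Gamma> (FAtom (Eq (TSuc (num (k + i))) (TSuc (num (k + j)))))" by simp
  from Suc.IH[OF provable_Eq_TSuc_cancel[OF this]] show ?case .
qed simp

lemma provable_absurd_Eq_num:
  assumes "i \<noteq> j" and "provable \<Gamma> (FAtom (Eq (num i) (num j)))"
  shows "provable \<Gamma> (FAtom X)"
proof -
  have absurd: "provable \<Gamma> (FAtom X)" if "provable \<Gamma> (FAtom (Eq (num m) (num n)))" "n < m" for m n
  proof -
    obtain d where "m = n + Suc d" using less_imp_Suc_add[OF \<open>n < m\<close>] by auto
    with that(1) have "provable \<Gamma> (FAtom (Eq (num (n + Suc d)) (num (n + 0))))" by simp
    from provable_Eq_num_cancel[OF this]
    have "provable \<Gamma> (FAtom (Eq (TSuc (num d)) TZero))" by simp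
    moreover have "provable \<Gamma> (FAtom (compl (Eq (TSuc (num d)) TZero)))"
      using provable_post[OF post_rule.suc_ne_zero] by simp
    ultimately show ?thesis by (rule provable_absurd)
  qed
  show ?thesis
  proof (cases "i < j")
    case True
    with absurd[OF provable_Eq_sym[OF assms(2)]] show ?thesis .
  next
    case False
    with assms absurd[OF assms(2)] show ?thesis by simp
  qed
qed

lemma provable_Neq_num:
  assumes "i \<noteq> j"
  shows "provable [] (FAtom (Neq (num i) (num j)))"
proof -
  let ?P = "Eq (num i) (num j)"
  have "der [(0, FAtom ?P)] (PVar 0) (FAtom ?P)" by (rule der.var) simp
  then have "provable [(0, FAtom ?P)] (FAtom (compl ?P))"
    using provable_absurd_Eq_num[OF assms] by blast
  from provable_compl_by_em1[OF _ this] show ?thesis by simp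
qed

lemma provable_true_atom:
  assumes "afv a = {}" and "aeval e a"
  shows "provable [] (FAtom a)"
proof (cases a)
  case (Eq s t)
  with assms have "tfv s = {}" "tfv t = {}" "teval e s = teval e t" by auto
  with provable_Eq_num_teval[of s "[]" e] provable_Eq_num_teval[of t "[]" e]
  have "provable [] (FAtom (Eq s (num (teval e t))))" "provable [] (FAtom (Eq (num (teval e t)) t))"
    by (auto intro: provable_Eq_sym)
  from provable_Eq_trans[OF this] Eq show ?thesis by simp
next
  case (Neq s t)
  with assms have "tfv s = {}" "tfv t = {}" "teval e s \<noteq> teval e t" by auto
  with provable_Neq_cong[OF provable_Neq_num
      provable_Eq_sym[OF provable_Eq_num_teval] provable_Eq_sym[OF provable_Eq_num_teval]] Neq
  show ?thesis by simp
qed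

section \<open>The slash\<close>

definition provable_at :: "(nat \<Rightarrow> nat) \<Rightarrow> fm \<Rightarrow> bool" where
  "provable_at e A \<longleftrightarrow> provable [] (fsubst (num \<circ> e) A)"

lemma provable_at_fsubst: "provable_at e (fsubst \<sigma> A) \<longleftrightarrow> provable_at (\<lambda>i. teval e (\<sigma> i)) A"
proof -
  let ?\<sigma>' = "\<lambda>i. tsubst (num \<circ> e) (\<sigma> i)" and ?\<tau> = "num \<circ> (\<lambda>i. teval e (\<sigma> i))"
  have closed: "tfv (?\<sigma>' i) = {}" "tfv (?\<tau> i) = {}" for i
    by (simp_all add: tfv_tsubst)
  have "teval (\<lambda>_. 0) (?\<sigma>' i) = teval (\<lambda>_. 0) (?\<tau> i)" for i
    by (simp add: teval_tsubst)
  then have "provable [] (FAtom (Eq (?\<sigma>' i) (?\<tau> i)))" "provable [] (FAtom (Eq (?\<tau> i) (?\<sigma>' i)))" for i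
    using provable_true_atom[of "Eq (?\<sigma>' i) (?\<tau> i)" "\<lambda>_. 0"]
      provable_true_atom[of "Eq (?\<tau> i) (?\<sigma>' i)" "\<lambda>_. 0"] closed by simp_all
  then show ?thesis
    unfolding provable_at_def fsubst_fsubst by (blast intro: provable_fsubst_cong)
qed

text \<open>The slash is indexed by numeric environments rather than by closed substitutions: substitution
  then acts on it through the values of terms only (\<open>slash_fsubst\<close>), and the work of
  identifying a term with the numeral of its value is confined to \<open>provable_at\<close>.\<close>
primrec slash :: "fm \<Rightarrow> (nat \<Rightarrow> nat) \<Rightarrow> bool" where
  "slash (FAtom a) e \<longleftrightarrow> aeval e a"
| "slash (FConj A B) e \<longleftrightarrow> slash A e \<and> slash B e"
| "slash (FDisj A B) e \<longleftrightarrow> (provable_at e A \<and> slash A e \<and> holds e A) \<or> (provable_at e B \<and> slash B e \<and> holds e B)"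
| "slash (FImp A B) e \<longleftrightarrow> (provable_at e A \<and> slash A e \<and> holds e A \<longrightarrow> slash B e)"
| "slash (FAll A) e \<longleftrightarrow> (\<forall>n. slash A (case_nat n e))"
| "slash (FEx A) e \<longleftrightarrow> (\<exists>n. provable_at (case_nat n e) A \<and> slash A (case_nat n e) \<and> holds (case_nat n e) A)"

definition realized :: "(nat \<Rightarrow> nat) \<Rightarrow> fm \<Rightarrow> bool" where
  "realized e A \<longleftrightarrow> provable_at e A \<and> slash A e \<and> holds e A"

lemma slash_fsubst: "slash (fsubst \<sigma> A) e \<longleftrightarrow> slash A (\<lambda>i. teval e (\<sigma> i))"
  by (induction A arbitrary: \<sigma> e) (simp_all add: aeval_asubst provable_at_fsubst holds_fsubst teval_up)

lemma realized_fsubst: "realized e (fsubst \<sigma> A) \<longleftrightarrow> realized (\<lambda>i. teval e (\<sigma> i)) A"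
  by (simp add: realized_def provable_at_fsubst slash_fsubst holds_fsubst)

lemma slash_inst: "slash (fsubst (inst t) A) e \<longleftrightarrow> slash A (case_nat (teval e t) e)"
  and realized_inst: "realized e (fsubst (inst t) A) \<longleftrightarrow> realized (case_nat (teval e t) e) A"
  by (simp_all add: slash_fsubst realized_fsubst teval_inst)

lemma slash_succ0: "slash (fsubst succ0 A) (case_nat n e) \<longleftrightarrow> slash A (case_nat (Suc n) e)"
  by (simp add: slash_fsubst teval_succ0)

lemma slash_flift: "slash (flift A) (case_nat n e) \<longleftrightarrow> slash A e"
  and realized_flift: "realized (case_nat n e) (flift A) \<longleftrightarrow> realized e A"
  by (simp_all add: flift_def slash_fsubst realized_fsubst)

lemma realized_of_slash:
  assumes "der \<Gamma> u A" and "\<forall>B\<in>snd ` set \<Gamma>. realized e B" and "slash A e"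
  shows "realized e A"
  using assms der_sound[OF assms(1)] provable_fsubst_of_hyps[OF assms(1)]
  unfolding realized_def provable_at_def by blast

lemma slash_sound:
  assumes "der \<Gamma> u A" and "\<forall>B\<in>snd ` set \<Gamma>. realized e B"
  shows "slash A e"
  using assms
proof (induction arbitrary: e rule: der.induct)
  case (var \<Gamma> x A)
  then show ?case by (force simp: realized_def dest: map_of_SomeD)
next
  case (hyp \<Gamma> a P)
  then show ?case by (force simp: realized_def dest: map_of_SomeD)
next
  case (wit \<Gamma> a P)
  then show ?case by (force simp: realized_def dest: map_of_SomeD)
next
  case (conjE1 \<Gamma> u A B)
  from conjE1.IH[OF conjE1.prems] show ?case by simp
next
  case (conjE2 \<Gamma> u A B)
  from conjE2.IH[OF conjE2.prems] show ?case by simp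
next
  case (impI x A \<Gamma> u B)
  then show ?case by (simp add: realized_def)
next
  case (impE \<Gamma> u A B v)
  have "realized e A" by (rule realized_of_slash[OF impE.hyps(2) impE.prems impE.IH(2)[OF impE.prems]])
  with impE.IH(1)[OF impE.prems] show ?case by (simp add: realized_def)
next
  case (disjI1 \<Gamma> u A B)
  have "realized e A" by (rule realized_of_slash[OF disjI1.hyps disjI1.prems disjI1.IH[OF disjI1.prems]])
  then show ?case by (simp add: realized_def)
next
  case (disjI2 \<Gamma> u B A)
  have "realized e B" by (rule realized_of_slash[OF disjI2.hyps disjI2.prems disjI2.IH[OF disjI2.prems]])
  then show ?case by (simp add: realized_def)
next
  case (disjE \<Gamma> u A B x v C y w)
  from disjE.IH(1)[OF disjE.prems] have "realized e A \<or> realized e B" by (simp add: realized_def)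
  then show ?case
  proof
    assume "realized e A"
    with disjE.prems show ?case by (intro disjE.IH(2)) simp
  next
    assume "realized e B"
    with disjE.prems show ?case by (intro disjE.IH(3)) simp
  qed
next
  case (allI \<Gamma> u A)
  have "slash A (case_nat n e)" for n
    by (rule allI.IH) (use allI.prems in \<open>simp add: snd_set_ctx_lift realized_flift\<close>)
  then show ?case by simp
next
  case (allE \<Gamma> u A t)
  from allE.IH[OF allE.prems] show ?case by (simp add: slash_inst)
next
  case (exI \<Gamma> u t A)
  have "realized e (fsubst (inst t) A)" by (rule realized_of_slash[OF exI.hyps exI.prems exI.IH[OF exI.prems]])
  then have "realized (case_nat (teval e t) e) A" by (simp only: realized_inst)
  then show ?case by (auto simp: realized_def)
next
  case (exE \<Gamma> u A x v C)
  from exE.IH(1)[OF exE.prems] obtain n where "realized (case_nat n e) A"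
    by (auto simp: realized_def)
  with exE.prems have "slash (flift C) (case_nat n e)"
    by (intro exE.IH(2)) (simp add: snd_set_ctx_lift realized_flift)
  then show ?case by (simp add: slash_flift)
next
  case (ind \<Gamma> u A v t)
  have "slash A (case_nat n e)" for n
  proof (induction n)
    case 0
    from ind.IH(1)[OF ind.prems] show ?case by (simp add: slash_inst)
  next
    case (Suc n)
    have "realized e (fsubst (inst (num n)) A)"
      using realized_of_slash[OF der.ind[OF ind.hyps] ind.prems] Suc by (simp add: slash_inst)
    then have "realized (case_nat n e) A" by (simp only: realized_inst teval_num)
    with ind.IH(2)[OF ind.prems] have "slash (fsubst succ0 A) (case_nat n e)"
      by (simp add: realized_def)
    then show ?case by (simp only: slash_succ0)
  qed
  then show ?case by (simp add: slash_inst)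
next
  case (post us Ps \<Gamma> P)
  have "der \<Gamma> (PPost us) (FAtom P)" by (rule der.post[OF post.hyps(1) _ post.hyps(2)]) (use post.IH in blast)
  from der_sound[OF this] post.prems show ?case by (simp add: realized_def)
next
  case (em1 a P \<Gamma> u C v)
  from der_sound[OF der.em1[OF em1.hyps]] em1.prems
  obtain n where n: "aeval (case_nat n e) C" by (auto simp: realized_def)
  have "afv (asubst (num \<circ> case_nat n e) C) = {}" by (cases C) (simp_all add: tfv_tsubst)
  with n have "provable_at (case_nat n e) (FAtom C)"
    unfolding provable_at_def by (auto intro: provable_true_atom simp: aeval_asubst)
  with n show ?case by auto
qed simp

theorem mainTheorem4:
  assumes "der [] t (FDisj A B)"
    and "pt_closed t"
    and "fm_closed (FDisj A B)"
  shows "(\<exists>u. der [] u A) \<or> (\<exists>v. der [] v B)"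
proof -
  let ?e = "\<lambda>_. 0 :: nat"
  have "slash (FDisj A B) ?e" using slash_sound[OF assms(1)] by simp
  then have "provable_at ?e A \<or> provable_at ?e B" by auto
  moreover have "ffv A = {}" and "ffv B = {}" using assms(3) by (auto simp: fm_closed_def)
  ultimately show ?thesis by (simp add: provable_at_def fsubst_closed)
qed

end
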